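(* Let $\mathcal{C}=(\mathcal{T},\mathcal{I},\mathcal{R})$ be an extraction context with thresholds \textit{minsupp} and \textit{minbond}. Then $\mathcal{RCPR}=\mathcal{CRCP}\cup\mathcal{MRCP}$ is a perfect cover of $\mathcal{RCP}$: it is an exact concise representation of $\mathcal{RCP}$ and its size never exceeds that of $\mathcal{RCP}$, i.e. $|\mathcal{RCPR}|\le|\mathcal{RCP}|$ for every extraction context and all values of \textit{minsupp} and \textit{minbond}.
   Context: An extraction context is a triple $\mathcal{C}=(\mathcal{T},\mathcal{I},\mathcal{R})$ with $\mathcal{T}$ a finite set of transactions, $\mathcal{I}$ a finite set of items and $\mathcal{R}\subseteq\mathcal{T}\times\mathcal{I}$. For a pattern $I\subseteq\mathcal{I}$: $\mathit{Supp}(\wedge I)=|\{t:\forall i\in I,(t,i)\in\mathcal{R}\}|$, $\mathit{Supp}(\vee I)=|\{t:\exists i\in I,(t,i)\in\mathcal{R}\}|$, and for nonempty $I$, $\mathit{bond}(I)=\mathit{Supp}(\wedge I)/\mathit{Supp}(\vee I)$ (with $\mathit{bond}(\emptyset)=+\infty$ by convention). $\mathcal{RCP}=\{I\subseteq\mathcal{I}:\mathit{Supp}(\wedge I)<\textit{minsupp},\ \mathit{bond}(I)\ge\textit{minbond}\}$. $\mathcal{CRCP}=\{I\in\mathcal{RCP}:\forall I_1\supsetneq I,\ \mathit{bond}(I)>\mathit{bond}(I_1)\}$; $\mathcal{MRCP}=\{I\in\mathcal{RCP}:\forall I_1\subsetneq I,\ \mathit{bond}(I)<\mathit{bond}(I_1)\}$.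 A family $\mathcal{S}\subseteq\mathcal{RCP}$, with each $J\in\mathcal{S}$ recorded together with $\mathit{Supp}(\wedge J)$ and $\mathit{bond}(J)$, is an exact concise representation of $\mathcal{RCP}$ if, for every pattern $I\subseteq\mathcal{I}$, the recorded data alone suffice to decide whether $I\in\mathcal{RCP}$ and, when $I\in\mathcal{RCP}$, to determine exactly $\mathit{Supp}(\wedge I)$ and $\mathit{bond}(I)$. *)

theory Defs
  imports "HOL-Library.Extended_Real"
begin

definition extraction_context :: "'t set \<Rightarrow> 'i set \<Rightarrow> ('t \<times> 'i) set \<Rightarrow> bool" where
  "extraction_context T Its R \<longleftrightarrow> finite T \<and> finite Its \<and> R \<subseteq> T \<times> Its"

definition conj_supp :: "'t set \<Rightarrow> ('t \<times> 'i) set \<Rightarrow> 'i set \<Rightarrow> nat" where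
  "conj_supp T R I = card {t \<in> T. \<forall>i\<in>I. (t, i) \<in> R}"

definition disj_supp :: "'t set \<Rightarrow> ('t \<times> 'i) set \<Rightarrow> 'i set \<Rightarrow> nat" where
  "disj_supp T R I = card {t \<in> T. \<exists>i\<in>I. (t, i) \<in> R}"

text \<open>bond(I) = Supp(\<and>I)/Supp(\<or>I) for nonempty I, +\<infinity> for I = {}.
  (Real division: x/0 = 0 in Isabelle; only relevant if no transaction contains an item of I.)\<close>
definition bond :: "'t set \<Rightarrow> ('t \<times> 'i) set \<Rightarrow> 'i set \<Rightarrow> ereal" where
  "bond T R I = (if I = {} then \<infinity>
                 else ereal (real (conj_supp T R I) / real (disj_supp T R I)))"

definition RCP :: "'t set \<Rightarrow> 'i set \<Rightarrow> ('t \<times> 'i) set \<Rightarrow> real \<Rightarrow> real \<Rightarrow> 'i set set" where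
  "RCP T Its R minsupp minbond =
     {I. I \<subseteq> Its \<and> real (conj_supp T R I) < minsupp \<and> bond T R I \<ge> ereal minbond}"

definition CRCP :: "'t set \<Rightarrow> 'i set \<Rightarrow> ('t \<times> 'i) set \<Rightarrow> real \<Rightarrow> real \<Rightarrow> 'i set set" where
  "CRCP T Its R minsupp minbond =
     {I \<in> RCP T Its R minsupp minbond.
        \<forall>I1. I \<subset> I1 \<and> I1 \<subseteq> Its \<longrightarrow> bond T R I > bond T R I1}"

definition MRCP :: "'t set \<Rightarrow> 'i set \<Rightarrow> ('t \<times> 'i) set \<Rightarrow> real \<Rightarrow> real \<Rightarrow> 'i set set" where
  "MRCP T Its R minsupp minbond =
     {I \<in> RCP T Its R minsupp minbond.
        \<forall>I1. I1 \<subset> I \<longrightarrow> bond T R I < bond T R I1}"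

definition RCPR :: "'t set \<Rightarrow> 'i set \<Rightarrow> ('t \<times> 'i) set \<Rightarrow> real \<Rightarrow> real \<Rightarrow> 'i set set" where
  "RCPR T Its R minsupp minbond = CRCP T Its R minsupp minbond \<union> MRCP T Its R minsupp minbond"

definition recorded :: "'t set \<Rightarrow> ('t \<times> 'i) set \<Rightarrow> 'i set set \<Rightarrow> ('i set \<times> nat \<times> ereal) set" where
  "recorded T R S = {(J, conj_supp T R J, bond T R J) | J. J \<in> S}"

definition exact_concise_rep ::
  "('t set \<Rightarrow> 'i set \<Rightarrow> ('t \<times> 'i) set \<Rightarrow> real \<Rightarrow> real \<Rightarrow> 'i set set) \<Rightarrow> bool" where
  "exact_concise_rep Rep \<longleftrightarrow>
     (\<forall>T Its R minsupp minbond. extraction_context T Its R \<longrightarrow>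
          Rep T Its R minsupp minbond \<subseteq> RCP T Its R minsupp minbond) \<and>
     (\<exists>Dec :: ('i set \<times> nat \<times> ereal) set \<Rightarrow> real \<Rightarrow> real \<Rightarrow> 'i set \<Rightarrow> (nat \<times> ereal) option.
        \<forall>T Its R minsupp minbond I. extraction_context T Its R \<longrightarrow> I \<subseteq> Its \<longrightarrow>
          Dec (recorded T R (Rep T Its R minsupp minbond)) minsupp minbond I =
            (if I \<in> RCP T Its R minsupp minbond
             then Some (conj_supp T R I, bond T R I) else None))"

end

theory Submission
  imports Defs
begin

text \<open>Along a chain I \<subseteq> J the conjunctive support decreases and the disjunctive support
  increases, so bond is antitone, and equal bonds at the two ends force equal conjunctive
  supports. Consequently RCP is convex: every rare correlated pattern I lies between a minimal
  one J \<subseteq> I in MRCP and a closed one K \<supseteq> I in CRCP with bond K = bond I, and conversely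
  every pattern between two members of RCPR is in RCP. The data of I are then those of a
  recorded superset of I of largest bond.\<close>

lemma ratio_antimono:
  fixes c c' d d' :: nat
  assumes "c' \<le> c" "c \<le> d" "d \<le> d'"
  shows "real c' / real d' \<le> real c / real d"
proof (cases "d = 0")
  case False
  then show ?thesis using assms by (intro frac_le) auto
qed (use assms in simp)

lemma ratio_eq_imp_numerator_eq:
  fixes c c' d d' :: nat
  assumes "c' \<le> c" "c \<le> d" "d \<le> d'" and eq: "real c' / real d' = real c / real d"
  shows "c' = c"
proof (cases "c = 0")
  case False
  then have "d > 0" "d' > 0" using assms(2,3) by auto
  then have "real c' * real d = real c * real d'" using eq by (simp add: field_simps)
  also have "\<dots> \<ge> real c * real d" using assms(3) by (simp add: mult_left_mono)
  finally have "c \<le> c'" using \<open>d > 0\<close> by simp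
  then show ?thesis using assms(1) by simp
qed (use assms(1) in simp)

lemma conj_supp_antimono: "finite T \<Longrightarrow> I \<subseteq> J \<Longrightarrow> conj_supp T R J \<le> conj_supp T R I"
  unfolding conj_supp_def by (rule card_mono) auto

lemma disj_supp_mono: "finite T \<Longrightarrow> I \<subseteq> J \<Longrightarrow> disj_supp T R I \<le> disj_supp T R J"
  unfolding disj_supp_def by (rule card_mono) auto

lemma conj_supp_le_disj_supp: "finite T \<Longrightarrow> I \<noteq> {} \<Longrightarrow> conj_supp T R I \<le> disj_supp T R I"
  unfolding disj_supp_def conj_supp_def by (rule card_mono) auto

lemma bond_nonempty:
  "I \<noteq> {} \<Longrightarrow> bond T R I = ereal (real (conj_supp T R I) / real (disj_supp T R I))"
  by (simp add: bond_def)

lemma bond_antimono: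
  assumes "finite T" "I \<subseteq> J"
  shows "bond T R J \<le> bond T R I"
proof (cases "I = {}")
  case False
  then have "J \<noteq> {}" using assms(2) by auto
  with False show ?thesis
    using ratio_antimono[OF conj_supp_antimono[OF assms] conj_supp_le_disj_supp[OF assms(1) False]
        disj_supp_mono[OF assms]]
    by (simp add: bond_nonempty)
qed (simp add: bond_def)

lemma bond_eq_imp_conj_supp_eq:
  assumes "finite T" "I \<subseteq> J" and eq: "bond T R J = bond T R I"
  shows "conj_supp T R J = conj_supp T R I"
proof (cases "I = {}")
  case True
  then have "J = {}" using eq by (auto simp: bond_def split: if_splits)
  with True show ?thesis by simp
next
  case False
  then have "J \<noteq> {}" using assms(2) by auto
  with False show ?thesis
    using assms eq conj_supp_antimono conj_supp_le_disj_supp disj_supp_mono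
    by (intro ratio_eq_imp_numerator_eq[where d = "disj_supp T R I" and d' = "disj_supp T R J"])
      (simp_all add: bond_nonempty)
qed

lemma bond_less_if_conj_supp_less:
  assumes "finite T" "I \<subseteq> J" "conj_supp T R J < conj_supp T R I"
  shows "bond T R J < bond T R I"
  using bond_antimono[OF assms(1,2)] bond_eq_imp_conj_supp_eq[OF assms(1,2)] assms(3)
  by (metis order.not_eq_order_implies_strict less_irrefl)

lemma exists_closed_superset:
  assumes "finite T" "finite Its" "I \<subseteq> Its"
  shows "\<exists>K. I \<subseteq> K \<and> K \<subseteq> Its \<and> bond T R K = bond T R I \<and>
             (\<forall>K1. K \<subset> K1 \<and> K1 \<subseteq> Its \<longrightarrow> bond T R K1 < bond T R K)"
proof -
  define A where "A = {K. I \<subseteq> K \<and> K \<subseteq> Its \<and> bond T R K = bond T R I}"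
  have "finite A" using \<open>finite Its\<close> by (intro finite_subset[of A "Pow Its"]) (auto simp: A_def)
  moreover have "A \<noteq> {}" using assms(3) by (auto simp: A_def)
  ultimately obtain K where "K \<in> A" and maximal: "\<forall>K1 \<in> A. K \<subseteq> K1 \<longrightarrow> K = K1"
    by (metis finite_has_maximal)
  then have K: "I \<subseteq> K" "K \<subseteq> Its" "bond T R K = bond T R I" by (simp_all add: A_def)
  have "\<forall>K1. K \<subset> K1 \<and> K1 \<subseteq> Its \<longrightarrow> bond T R K1 < bond T R K"
  proof (intro allI impI)
    fix K1 assume K1: "K \<subset> K1 \<and> K1 \<subseteq> Its"
    have "K1 \<notin> A" using K1 maximal by blast
    with K K1 have "bond T R K1 \<noteq> bond T R K" by (auto simp: A_def)
    moreover have "bond T R K1 \<le> bond T R K" using bond_antimono[OF \<open>finite T\<close>] K1 by blast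
    ultimately show "bond T R K1 < bond T R K" by simp
  qed
  with K show ?thesis by blast
qed

lemma finite_RCP: "finite Its \<Longrightarrow> finite (RCP T Its R minsupp minbond)"
  by (rule finite_subset[of _ "Pow Its"]) (auto simp: RCP_def)

lemma RCPR_subset_RCP: "RCPR T Its R minsupp minbond \<subseteq> RCP T Its R minsupp minbond"
  unfolding RCPR_def CRCP_def MRCP_def by blast

lemma RCP_convex:
  assumes "finite T" "J \<in> RCP T Its R minsupp minbond" "K \<in> RCP T Its R minsupp minbond"
    and "J \<subseteq> I" "I \<subseteq> K"
  shows "I \<in> RCP T Its R minsupp minbond"
proof -
  have "ereal minbond \<le> bond T R K" using assms(3) by (simp add: RCP_def)
  then have "ereal minbond \<le> bond T R I"
    using bond_antimono[OF \<open>finite T\<close> \<open>I \<subseteq> K\<close>, of R] by (rule order_trans)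
  moreover have "real (conj_supp T R I) < minsupp"
    using assms(2) conj_supp_antimono[OF \<open>finite T\<close> \<open>J \<subseteq> I\<close>, of R] by (simp add: RCP_def)
  ultimately show ?thesis using assms(3,5) by (auto simp: RCP_def)
qed

lemma RCP_has_CRCP_superset:
  assumes "finite T" "finite Its" and I: "I \<in> RCP T Its R minsupp minbond"
  shows "\<exists>K \<in> CRCP T Its R minsupp minbond. I \<subseteq> K \<and> bond T R K = bond T R I"
proof -
  obtain K where K: "I \<subseteq> K" "K \<subseteq> Its" "bond T R K = bond T R I"
    and closed: "\<forall>K1. K \<subset> K1 \<and> K1 \<subseteq> Its \<longrightarrow> bond T R K1 < bond T R K"
    using exists_closed_superset[OF assms(1,2), of I R] I by (auto simp: RCP_def)
  have "K \<in> RCP T Its R minsupp minbond"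
    using I K conj_supp_antimono[OF \<open>finite T\<close> \<open>I \<subseteq> K\<close>, of R] by (auto simp: RCP_def)
  with closed have "K \<in> CRCP T Its R minsupp minbond" by (simp add: CRCP_def)
  with K show ?thesis by blast
qed

lemma RCP_has_MRCP_subset:
  assumes "finite T" "finite Its" and I: "I \<in> RCP T Its R minsupp minbond"
  shows "\<exists>J \<in> MRCP T Its R minsupp minbond. J \<subseteq> I"
proof -
  define A where "A = {J. J \<subseteq> I \<and> real (conj_supp T R J) < minsupp}"
  have "finite A" using I \<open>finite Its\<close>
    by (intro finite_subset[of A "Pow Its"]) (auto simp: A_def RCP_def)
  moreover have "A \<noteq> {}" using I by (auto simp: A_def RCP_def)
  ultimately obtain J where "J \<in> A" and minimal: "\<forall>J1 \<in> A. J1 \<subseteq> J \<longrightarrow> J = J1"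
    by (metis finite_has_minimal)
  then have J: "J \<subseteq> I" "real (conj_supp T R J) < minsupp" by (simp_all add: A_def)
  have "J \<in> RCP T Its R minsupp minbond"
    using I J bond_antimono[OF \<open>finite T\<close> \<open>J \<subseteq> I\<close>, of R] by (auto simp: RCP_def)
  moreover have "bond T R J < bond T R J1" if "J1 \<subset> J" for J1
  proof -
    have "\<not> real (conj_supp T R J1) < minsupp" using that J minimal by (auto simp: A_def)
    with J(2) have "conj_supp T R J < conj_supp T R J1" by linarith
    with that show ?thesis using bond_less_if_conj_supp_less[OF \<open>finite T\<close>] by blast
  qed
  ultimately show ?thesis using J(1) by (auto simp: MRCP_def)
qed

lemma RCP_iff_between_RCPR:
  assumes "finite T" "finite Its" "I \<subseteq> Its"
  shows "I \<in> RCP T Its R minsupp minbond \<longleftrightarrow>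
    (\<exists>J \<in> RCPR T Its R minsupp minbond. J \<subseteq> I) \<and> (\<exists>K \<in> RCPR T Its R minsupp minbond. I \<subseteq> K)"
proof
  assume I: "I \<in> RCP T Its R minsupp minbond"
  obtain J where "J \<in> MRCP T Its R minsupp minbond" "J \<subseteq> I"
    using RCP_has_MRCP_subset[OF assms(1,2) I] by blast
  moreover obtain K where "K \<in> CRCP T Its R minsupp minbond" "I \<subseteq> K"
    using RCP_has_CRCP_superset[OF assms(1,2) I] by blast
  ultimately show "(\<exists>J \<in> RCPR T Its R minsupp minbond. J \<subseteq> I) \<and> (\<exists>K \<in> RCPR T Its R minsupp minbond. I \<subseteq> K)"
    unfolding RCPR_def by blast
next
  assume "(\<exists>J \<in> RCPR T Its R minsupp minbond. J \<subseteq> I) \<and> (\<exists>K \<in> RCPR T Its R minsupp minbond. I \<subseteq> K)"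
  then obtain J K where J: "J \<in> RCPR T Its R minsupp minbond" "J \<subseteq> I"
    and K: "K \<in> RCPR T Its R minsupp minbond" "I \<subseteq> K"
    by blast
  show "I \<in> RCP T Its R minsupp minbond"
    using RCP_convex[OF assms(1) _ _ J(2) K(2)] J(1) K(1) RCPR_subset_RCP by blast
qed

lemma in_recorded_iff [simp]:
  "(K, p) \<in> recorded T R S \<longleftrightarrow> K \<in> S \<and> p = (conj_supp T R K, bond T R K)"
  unfolding recorded_def by blast

definition decode_RCP :: "('i set \<times> nat \<times> ereal) set \<Rightarrow> 'i set \<Rightarrow> (nat \<times> ereal) option" where
  "decode_RCP D I =
    (if (\<exists>J p. (J, p) \<in> D \<and> J \<subseteq> I) \<and> (\<exists>K p. (K, p) \<in> D \<and> I \<subseteq> K)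
     then Some (SOME p. \<exists>K. (K, p) \<in> D \<and> I \<subseteq> K \<and>
                             (\<forall>K' p'. (K', p') \<in> D \<and> I \<subseteq> K' \<longrightarrow> snd p' \<le> snd p))
     else None)"

lemma recorded_superset_max_bond_iff:
  assumes "finite T" "finite Its" and I: "I \<in> RCP T Its R minsupp minbond"
  defines "D \<equiv> recorded T R (RCPR T Its R minsupp minbond)"
  shows "(\<exists>K. (K, p) \<in> D \<and> I \<subseteq> K \<and> (\<forall>K' p'. (K', p') \<in> D \<and> I \<subseteq> K' \<longrightarrow> snd p' \<le> snd p))
    \<longleftrightarrow> p = (conj_supp T R I, bond T R I)"
proof -
  obtain K0 where K0: "K0 \<in> RCPR T Its R minsupp minbond" "I \<subseteq> K0" "bond T R K0 = bond T R I"
    using RCP_has_CRCP_superset[OF assms(1-3)] unfolding RCPR_def by blast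
  have superset_bond: "bond T R K \<le> bond T R I" if "I \<subseteq> K" for K
    using bond_antimono[OF \<open>finite T\<close> that] .
  show ?thesis
  proof
    assume "\<exists>K. (K, p) \<in> D \<and> I \<subseteq> K \<and> (\<forall>K' p'. (K', p') \<in> D \<and> I \<subseteq> K' \<longrightarrow> snd p' \<le> snd p)"
    then obtain K where K: "K \<in> RCPR T Its R minsupp minbond" "I \<subseteq> K"
      "p = (conj_supp T R K, bond T R K)" "bond T R K0 \<le> bond T R K"
      using K0(1,2) by (auto simp: D_def)
    then have "bond T R K = bond T R I" using K0(3) superset_bond[OF K(2)] by simp
    with K show "p = (conj_supp T R I, bond T R I)"
      using bond_eq_imp_conj_supp_eq[OF \<open>finite T\<close>] by simp
  next
    assume p: "p = (conj_supp T R I, bond T R I)"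
    have "conj_supp T R K0 = conj_supp T R I"
      using bond_eq_imp_conj_supp_eq[OF \<open>finite T\<close> K0(2,3)] .
    with K0 p superset_bond
    show "\<exists>K. (K, p) \<in> D \<and> I \<subseteq> K \<and> (\<forall>K' p'. (K', p') \<in> D \<and> I \<subseteq> K' \<longrightarrow> snd p' \<le> snd p)"
      by (auto simp: D_def)
  qed
qed

lemma decode_RCP_recorded_RCPR:
  assumes "finite T" "finite Its" "I \<subseteq> Its"
  shows "decode_RCP (recorded T R (RCPR T Its R minsupp minbond)) I =
    (if I \<in> RCP T Its R minsupp minbond then Some (conj_supp T R I, bond T R I) else None)"
  using RCP_iff_between_RCPR[OF assms, of R minsupp minbond]
    recorded_superset_max_bond_iff[OF assms(1,2)]
  by (auto simp: decode_RCP_def Bex_def)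

theorem mainTheorem5:
  shows "exact_concise_rep (RCPR :: 't set \<Rightarrow> 'i set \<Rightarrow> ('t \<times> 'i) set \<Rightarrow> real \<Rightarrow> real \<Rightarrow> 'i set set)
         \<and> (\<forall>(T :: 't set) (Its :: 'i set) R minsupp minbond. extraction_context T Its R \<longrightarrow>
               card (RCPR T Its R minsupp minbond) \<le> card (RCP T Its R minsupp minbond))"
proof (intro conjI allI impI)
  show "exact_concise_rep (RCPR :: 't set \<Rightarrow> 'i set \<Rightarrow> ('t \<times> 'i) set \<Rightarrow> real \<Rightarrow> real \<Rightarrow> 'i set set)"
    unfolding exact_concise_rep_def extraction_context_def
    using RCPR_subset_RCP decode_RCP_recorded_RCPR
    by (intro conjI exI[of _ "\<lambda>D _ _. decode_RCP D"]) blast+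
next
  fix T :: "'t set" and Its :: "'i set" and R minsupp minbond
  assume "extraction_context T Its R"
  then show "card (RCPR T Its R minsupp minbond) \<le> card (RCP T Its R minsupp minbond)"
    by (intro card_mono RCPR_subset_RCP finite_RCP) (simp add: extraction_context_def)
qed

end
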